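(* Let $\alpha$ be a partial action datum of $M$ on $X\in\mathscr{C}$ such that the coproducts $\coprod_{m\in M}X$ and $\coprod_{(m,n)\in M\times M}\operatorname{dom}\alpha_n$ exist, and let $c\colon\coprod_{m\in M}X\to Y$ be a coequalizer of $p$ and $q$ in $\mathscr{C}$. Then for each $m\in M$ there is a unique morphism $\beta_m\colon Y\to Y$ with $\beta_m\circ c\circ u_s=c\circ u_{ms}$ for all $s\in M$, the datum $\beta(m)=[Y,\mathrm{id}_Y,\beta_m]$ is a global action of $M$ on $Y$, and $c\circ u_e\colon\alpha\to\beta$ is a reflection of $\alpha$ in $\mathrm{Act}_M(\mathscr{C})$.
   Context: Standing assumptions: $M$ is a monoid with identity $e$ and $\mathscr{C}$ is a category with pullbacks. A partial action datum of $M$ on $X$ assigns to each $m\in M$ an isomorphism class of spans $[\operatorname{dom}\alpha_m,\iota_m,\alpha_m]$ with $\iota_m\colon\operatorname{dom}\alpha_m\to X$ a monomorphism and $\alpha_m\colon\operatorname{dom}\alpha_m\to X$ (isomorphism of spans: an isomorphism of apexes commuting with both legs); representatives are fixed. A global action of $M$ on $Y$ is a datum with $\beta(m)=[Y,\mathrm{id}_Y,\beta_m]$, $\beta_e=\mathrm{id}_Y$, $\beta_n\circ\beta_m=\beta_{nm}$. Given data $\alpha$ on $X$ and $\beta$ on $Y$ with representatives $[\operatorname{dom}\alpha_m,\iota_m,\alpha_m]$, $[\operatorname{dom}\beta_m,\kappa_m,\beta_m]$, a datum morphism $\alpha\to\beta$ is a morphism $f\colon X\to Y$ such that for each $m$ there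 is $f_m$ with $\kappa_m\circ f_m=f\circ\iota_m$, $\beta_m\circ f_m=f\circ\alpha_m$. $\mathrm{Act}_M(\mathscr{C})$ is the category of global actions with datum morphisms. A reflection of $\alpha$ in $\mathrm{Act}_M(\mathscr{C})$ is a datum morphism $r\colon\alpha\to\beta$ with $\beta$ global such that for every datum morphism $f\colon\alpha\to\gamma$ with $\gamma$ global there is a unique datum morphism $f'\colon\beta\to\gamma$ with $f'\circ r=f$. Let $u_m\colon X\to\coprod_{m\in M}X$ and $u_{(m,n)}\colon\operatorname{dom}\alpha_n\to\coprod_{(m,n)\in M\times M}\operatorname{dom}\alpha_n$ be the coproduct inclusions, and let $p,q\colon\coprod_{(m,n)}\operatorname{dom}\alpha_n\to\coprod_{m}X$ be the unique morphisms with $p\circ u_{(m,n)}=u_{mn}\circ\iota_n$ and $q\circ u_{(m,n)}=u_m\circ\alpha_n$. *)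

theory Defs
  imports Main
begin

text \<open>A (small or large) category presented by objects of type 'o and arrows of type 'a.
  Comp g f is the composite g after f (defined when Cod f = Dom g).\<close>

record ('o, 'a) cat =
  Obj  :: "'o set"
  Arr  :: "'a set"
  Dom  :: "'a \<Rightarrow> 'o"
  Cod  :: "'a \<Rightarrow> 'o"
  Comp :: "'a \<Rightarrow> 'a \<Rightarrow> 'a"
  Idm  :: "'o \<Rightarrow> 'a"

definition hom :: "('o, 'a) cat \<Rightarrow> 'a \<Rightarrow> 'o \<Rightarrow> 'o \<Rightarrow> bool" where
  "hom C f x y \<longleftrightarrow> f \<in> Arr C \<and> Dom C f = x \<and> Cod C f = y"

definition is_category :: "('o, 'a) cat \<Rightarrow> bool" where
  "is_category C \<longleftrightarrow>
     (\<forall>x\<in>Obj C. hom C (Idm C x) x x) \<and>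
     (\<forall>f\<in>Arr C. Dom C f \<in> Obj C \<and> Cod C f \<in> Obj C) \<and>
     (\<forall>f\<in>Arr C. \<forall>g\<in>Arr C. Cod C f = Dom C g \<longrightarrow>
         hom C (Comp C g f) (Dom C f) (Cod C g)) \<and>
     (\<forall>f\<in>Arr C. \<forall>g\<in>Arr C. \<forall>h\<in>Arr C. Cod C f = Dom C g \<longrightarrow> Cod C g = Dom C h \<longrightarrow>
         Comp C h (Comp C g f) = Comp C (Comp C h g) f) \<and>
     (\<forall>f\<in>Arr C. Comp C (Idm C (Cod C f)) f = f \<and> Comp C f (Idm C (Dom C f)) = f)"

definition mono :: "('o, 'a) cat \<Rightarrow> 'a \<Rightarrow> bool" where
  "mono C f \<longleftrightarrow> f \<in> Arr C \<and>
     (\<forall>g\<in>Arr C. \<forall>h\<in>Arr C. Cod C g = Dom C f \<longrightarrow> Cod C h = Dom C f \<longrightarrow> Dom C g = Dom C h \<longrightarrow>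
        Comp C f g = Comp C f h \<longrightarrow> g = h)"

definition has_pullbacks :: "('o, 'a) cat \<Rightarrow> bool" where
  "has_pullbacks C \<longleftrightarrow>
     (\<forall>f\<in>Arr C. \<forall>g\<in>Arr C. Cod C f = Cod C g \<longrightarrow>
        (\<exists>P p1 p2. P \<in> Obj C \<and> hom C p1 P (Dom C f) \<and> hom C p2 P (Dom C g) \<and>
           Comp C f p1 = Comp C g p2 \<and>
           (\<forall>Q\<in>Obj C. \<forall>q1 q2. hom C q1 Q (Dom C f) \<longrightarrow> hom C q2 Q (Dom C g) \<longrightarrow>
               Comp C f q1 = Comp C g q2 \<longrightarrow>
               (\<exists>!k. hom C k Q P \<and> Comp C p1 k = q1 \<and> Comp C p2 k = q2))))"

definition is_coproduct :: "('o, 'a) cat \<Rightarrow> ('i \<Rightarrow> 'o) \<Rightarrow> 'o \<Rightarrow> ('i \<Rightarrow> 'a) \<Rightarrow> bool" where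
  "is_coproduct C A S u \<longleftrightarrow> S \<in> Obj C \<and> (\<forall>i. hom C (u i) (A i) S) \<and>
     (\<forall>Z\<in>Obj C. \<forall>h. (\<forall>i. hom C (h i) (A i) Z) \<longrightarrow>
        (\<exists>!k. hom C k S Z \<and> (\<forall>i. Comp C k (u i) = h i)))"

definition is_coequalizer :: "('o, 'a) cat \<Rightarrow> 'a \<Rightarrow> 'a \<Rightarrow> 'a \<Rightarrow> 'o \<Rightarrow> bool" where
  "is_coequalizer C p q c Y \<longleftrightarrow>
     p \<in> Arr C \<and> q \<in> Arr C \<and> Dom C p = Dom C q \<and> Cod C p = Cod C q \<and>
     Y \<in> Obj C \<and> hom C c (Cod C p) Y \<and> Comp C c p = Comp C c q \<and>
     (\<forall>Z\<in>Obj C. \<forall>h. hom C h (Cod C p) Z \<longrightarrow> Comp C h p = Comp C h q \<longrightarrow>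
        (\<exists>!k. hom C k Y Z \<and> Comp C k c = h))"

text \<open>Partial action datum of the monoid 'm on X, given by fixed representatives
  [D m, \<iota> m, \<alpha> m] of the span classes.\<close>
definition partial_action_datum ::
  "('o, 'a) cat \<Rightarrow> 'o \<Rightarrow> ('m \<Rightarrow> 'o) \<Rightarrow> ('m \<Rightarrow> 'a) \<Rightarrow> ('m \<Rightarrow> 'a) \<Rightarrow> bool" where
  "partial_action_datum C X D \<iota> \<alpha> \<longleftrightarrow> X \<in> Obj C \<and>
     (\<forall>m. D m \<in> Obj C \<and> hom C (\<iota> m) (D m) X \<and> mono C (\<iota> m) \<and> hom C (\<alpha> m) (D m) X)"

text \<open>Global action: datum with representatives [Y, id_Y, \<beta> m].\<close>
definition global_action :: "('o, 'a) cat \<Rightarrow> 'o \<Rightarrow> ('m::monoid_mult \<Rightarrow> 'a) \<Rightarrow> bool" where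
  "global_action C Y \<beta> \<longleftrightarrow> Y \<in> Obj C \<and> (\<forall>m. hom C (\<beta> m) Y Y) \<and>
     \<beta> 1 = Idm C Y \<and> (\<forall>m n. Comp C (\<beta> n) (\<beta> m) = \<beta> (n * m))"

definition datum_morphism ::
  "('o, 'a) cat \<Rightarrow> 'o \<Rightarrow> ('m \<Rightarrow> 'o) \<Rightarrow> ('m \<Rightarrow> 'a) \<Rightarrow> ('m \<Rightarrow> 'a) \<Rightarrow>
   'o \<Rightarrow> ('m \<Rightarrow> 'o) \<Rightarrow> ('m \<Rightarrow> 'a) \<Rightarrow> ('m \<Rightarrow> 'a) \<Rightarrow> 'a \<Rightarrow> bool" where
  "datum_morphism C X D \<iota> \<alpha> Y E \<kappa> \<beta> f \<longleftrightarrow> hom C f X Y \<and>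
     (\<forall>m. \<exists>fm. hom C fm (D m) (E m) \<and> Comp C (\<kappa> m) fm = Comp C f (\<iota> m) \<and>
                Comp C (\<beta> m) fm = Comp C f (\<alpha> m))"

abbreviation datum_morphism_to_global ::
  "('o, 'a) cat \<Rightarrow> 'o \<Rightarrow> ('m \<Rightarrow> 'o) \<Rightarrow> ('m \<Rightarrow> 'a) \<Rightarrow> ('m \<Rightarrow> 'a) \<Rightarrow> 'o \<Rightarrow> ('m \<Rightarrow> 'a) \<Rightarrow> 'a \<Rightarrow> bool" where
  "datum_morphism_to_global C X D \<iota> \<alpha> Y \<beta> f \<equiv>
     datum_morphism C X D \<iota> \<alpha> Y (\<lambda>_. Y) (\<lambda>_. Idm C Y) \<beta> f"

definition is_reflection ::
  "('o, 'a) cat \<Rightarrow> 'o \<Rightarrow> ('m::monoid_mult \<Rightarrow> 'o) \<Rightarrow> ('m \<Rightarrow> 'a) \<Rightarrow> ('m \<Rightarrow> 'a) \<Rightarrow> 'o \<Rightarrow> ('m \<Rightarrow> 'a) \<Rightarrow> 'a \<Rightarrow> bool" where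
  "is_reflection C X D \<iota> \<alpha> Y \<beta> r \<longleftrightarrow>
     global_action C Y \<beta> \<and> datum_morphism_to_global C X D \<iota> \<alpha> Y \<beta> r \<and>
     (\<forall>Z\<in>Obj C. \<forall>\<gamma>. global_action C Z \<gamma> \<longrightarrow>
        (\<forall>f. datum_morphism_to_global C X D \<iota> \<alpha> Z \<gamma> f \<longrightarrow>
           (\<exists>!f'. datum_morphism C Y (\<lambda>_. Y) (\<lambda>_. Idm C Y) \<beta> Z (\<lambda>_. Z) (\<lambda>_. Idm C Z) \<gamma> f' \<and>
                  Comp C f' r = f)))"

end

theory Submission
  imports Defs
begin

text \<open>
  The morphisms out of \<open>\<coprod>\<^sub>m X\<close> are the families \<open>(g\<^sub>s : X \<rightarrow> Z)\<^sub>s\<close>, and those coequalizing \<open>p\<close>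
  and \<open>q\<close> are the families with \<open>g\<^sub>m\<^sub>n \<circ> \<iota>\<^sub>n = g\<^sub>m \<circ> \<alpha>\<^sub>n\<close>. Left multiplication by \<open>m\<close> on the index
  preserves this condition, so it descends along \<open>c\<close> to \<open>\<beta>\<^sub>m : Y \<rightarrow> Y\<close>; uniqueness of factorizations
  through the coproduct and the coequalizer makes \<open>\<beta>\<close> an action. A datum morphism \<open>f : \<alpha> \<rightarrow> \<gamma>\<close> into
  a global action yields the coequalizing family \<open>g\<^sub>s = \<gamma>\<^sub>s \<circ> f\<close>, whose factorization through \<open>c\<close> is
  the required equivariant extension of \<open>f\<close> along \<open>c \<circ> u\<^sub>e\<close>.
\<close>

lemma comp_hom:
  assumes "is_category C" "hom C f x y" "hom C g y z"
  shows "hom C (Comp C g f) x z"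
  using assms unfolding is_category_def hom_def by auto

lemma comp_assoc:
  assumes "is_category C" "hom C f x y" "hom C g y z" "hom C h z w"
  shows "Comp C (Comp C h g) f = Comp C h (Comp C g f)"
  using assms unfolding is_category_def hom_def by auto

lemma comp_Idm_left:
  assumes "is_category C" "hom C f x y"
  shows "Comp C (Idm C y) f = f"
  using assms unfolding is_category_def hom_def by auto

lemma comp_Idm_right:
  assumes "is_category C" "hom C f x y"
  shows "Comp C f (Idm C x) = f"
  using assms unfolding is_category_def hom_def by auto

lemma Idm_hom: "is_category C \<Longrightarrow> x \<in> Obj C \<Longrightarrow> hom C (Idm C x) x x"
  unfolding is_category_def by blast

lemma hom_Obj:
  assumes "is_category C" "hom C f x y"
  shows "x \<in> Obj C" "y \<in> Obj C"
  using assms unfolding is_category_def hom_def by auto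

lemma coproduct_universal:
  assumes "is_coproduct C A S u" "Z \<in> Obj C" "\<And>i. hom C (h i) (A i) Z"
  shows "\<exists>!k. hom C k S Z \<and> (\<forall>i. Comp C k (u i) = h i)"
  using assms unfolding is_coproduct_def by blast

lemma coproduct_factor:
  assumes "is_coproduct C A S u" "Z \<in> Obj C" "\<And>i. hom C (h i) (A i) Z"
  obtains k where "hom C k S Z" "\<And>i. Comp C k (u i) = h i"
  using coproduct_universal[OF assms] by blast

lemma coproduct_eqI:
  assumes cat: "is_category C" and S: "is_coproduct C A S u"
    and k: "hom C k S Z" and k': "hom C k' S Z" and eq: "\<And>i. Comp C k (u i) = Comp C k' (u i)"
  shows "k = k'"
proof -
  have "hom C (u i) (A i) S" for i
    using S unfolding is_coproduct_def by blast
  then have "hom C (Comp C k (u i)) (A i) Z" for i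
    using comp_hom[OF cat _ k] by blast
  then have "\<exists>!kk. hom C kk S Z \<and> (\<forall>i. Comp C kk (u i) = Comp C k (u i))"
    by (rule coproduct_universal[OF S hom_Obj(2)[OF cat k]])
  then show ?thesis
    using k k' eq by auto
qed

lemma coequalizer_universal:
  assumes "is_coequalizer C p q c Y" "Z \<in> Obj C" "hom C h (Cod C p) Z"
    and "Comp C h p = Comp C h q"
  shows "\<exists>!k. hom C k Y Z \<and> Comp C k c = h"
  using assms unfolding is_coequalizer_def by blast

lemma coequalizer_factor:
  assumes "is_coequalizer C p q c Y" "is_category C" "hom C h (Cod C p) Z"
    and "Comp C h p = Comp C h q"
  obtains k where "hom C k Y Z" "Comp C k c = h"
  using coequalizer_universal[OF assms(1) hom_Obj(2)[OF assms(2,3)] assms(3,4)] by blast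

lemma coequalizer_eqI:
  assumes co: "is_coequalizer C p q c Y" and cat: "is_category C"
    and k: "hom C k Y Z" and k': "hom C k' Y Z" and eq: "Comp C k c = Comp C k' c"
  shows "k = k'"
proof -
  have c: "hom C c (Cod C p) Y" and pq: "Comp C c p = Comp C c q"
    and hp: "hom C p (Dom C p) (Cod C p)" and hq: "hom C q (Dom C p) (Cod C p)"
    using co unfolding is_coequalizer_def hom_def by auto
  have "Comp C (Comp C k c) p = Comp C (Comp C k c) q"
    using comp_assoc[OF cat hp c k] comp_assoc[OF cat hq c k] pq by simp
  then have "\<exists>!kk. hom C kk Y Z \<and> Comp C kk c = Comp C k c"
    by (rule coequalizer_universal[OF co hom_Obj(2)[OF cat k] comp_hom[OF cat c k]])
  then show ?thesis
    using k k' eq by auto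
qed

lemma datum_morphism_to_global_iff:
  assumes cat: "is_category C" and \<iota>: "\<And>m. hom C (\<iota> m) (D m) X"
  shows "datum_morphism_to_global C X D \<iota> \<alpha> Z \<gamma> f \<longleftrightarrow>
           hom C f X Z \<and> (\<forall>m. Comp C (\<gamma> m) (Comp C f (\<iota> m)) = Comp C f (\<alpha> m))"
proof
  assume dm: "datum_morphism_to_global C X D \<iota> \<alpha> Z \<gamma> f"
  have "Comp C (\<gamma> m) (Comp C f (\<iota> m)) = Comp C f (\<alpha> m)" for m
  proof -
    obtain fm where "hom C fm (D m) Z" "Comp C (Idm C Z) fm = Comp C f (\<iota> m)"
      and "Comp C (\<gamma> m) fm = Comp C f (\<alpha> m)"
      using dm unfolding datum_morphism_def by blast
    then show ?thesis using comp_Idm_left[OF cat] by metis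
  qed
  then show "hom C f X Z \<and> (\<forall>m. Comp C (\<gamma> m) (Comp C f (\<iota> m)) = Comp C f (\<alpha> m))"
    using dm unfolding datum_morphism_def by blast
next
  assume "hom C f X Z \<and> (\<forall>m. Comp C (\<gamma> m) (Comp C f (\<iota> m)) = Comp C f (\<alpha> m))"
  then show "datum_morphism_to_global C X D \<iota> \<alpha> Z \<gamma> f"
    unfolding datum_morphism_def
    using comp_hom[OF cat \<iota>] comp_Idm_left[OF cat comp_hom[OF cat \<iota>]] by fastforce
qed

lemma datum_morphism_global_iff:
  assumes cat: "is_category C" and Y: "Y \<in> Obj C"
  shows "datum_morphism C Y (\<lambda>_. Y) (\<lambda>_. Idm C Y) \<beta> Z (\<lambda>_. Z) (\<lambda>_. Idm C Z) \<gamma> f \<longleftrightarrow>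
           hom C f Y Z \<and> (\<forall>m. Comp C (\<gamma> m) f = Comp C f (\<beta> m))"
  using datum_morphism_to_global_iff[OF cat Idm_hom[OF cat Y], of \<beta> Z \<gamma> f]
    comp_Idm_right[OF cat] by metis

locale coequalizer_of_datum =
  fixes C :: "('o, 'a) cat"
    and X :: 'o and D :: "'m::monoid_mult \<Rightarrow> 'o" and \<iota> \<alpha> :: "'m \<Rightarrow> 'a"
    and S T Y :: 'o and u :: "'m \<Rightarrow> 'a" and v :: "'m \<times> 'm \<Rightarrow> 'a"
    and p q c :: 'a
  assumes cat: "is_category C"
    and datum: "partial_action_datum C X D \<iota> \<alpha>"
    and coproduct_S: "is_coproduct C (\<lambda>_. X) S u"
    and coproduct_T: "is_coproduct C (\<lambda>(m, n). D n) T v"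
    and p_hom: "hom C p T S" and p_v: "\<And>m n. Comp C p (v (m, n)) = Comp C (u (m * n)) (\<iota> n)"
    and q_hom: "hom C q T S" and q_v: "\<And>m n. Comp C q (v (m, n)) = Comp C (u m) (\<alpha> n)"
    and coequalizer: "is_coequalizer C p q c Y"
begin

abbreviation comp (infixr "\<cdot>" 55) where "g \<cdot> f \<equiv> Comp C g f"

lemma u_hom: "hom C (u s) X S"
  using coproduct_S unfolding is_coproduct_def by simp

lemma v_hom: "hom C (v (m, n)) (D n) T"
  using coproduct_T unfolding is_coproduct_def by (metis case_prod_conv)

lemma \<iota>_hom: "hom C (\<iota> n) (D n) X" and \<alpha>_hom: "hom C (\<alpha> n) (D n) X"
  using datum unfolding partial_action_datum_def by auto

lemma c_hom: "hom C c S Y" and c_coequalizes: "c \<cdot> p = c \<cdot> q" and Y_Obj: "Y \<in> Obj C"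
  using coequalizer p_hom unfolding is_coequalizer_def hom_def by auto

lemma S_Obj: "S \<in> Obj C"
  using coproduct_S unfolding is_coproduct_def by simp

lemma coequalizesI:
  assumes h: "hom C h S Z" and fam: "\<And>k n. (h \<cdot> u (k * n)) \<cdot> \<iota> n = (h \<cdot> u k) \<cdot> \<alpha> n"
  shows "h \<cdot> p = h \<cdot> q"
proof (rule coproduct_eqI[OF cat coproduct_T comp_hom[OF cat p_hom h] comp_hom[OF cat q_hom h]])
  fix i :: "'m \<times> 'm"
  obtain k n where i: "i = (k, n)" by fastforce
  have "(h \<cdot> p) \<cdot> v (k, n) = (h \<cdot> u (k * n)) \<cdot> \<iota> n"
    using comp_assoc[OF cat v_hom p_hom h] comp_assoc[OF cat \<iota>_hom u_hom h] p_v by simp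
  also have "\<dots> = (h \<cdot> u k) \<cdot> \<alpha> n" by (rule fam)
  also have "\<dots> = (h \<cdot> q) \<cdot> v (k, n)"
    using comp_assoc[OF cat v_hom q_hom h] comp_assoc[OF cat \<alpha>_hom u_hom h] q_v by simp
  finally show "(h \<cdot> p) \<cdot> v i = (h \<cdot> q) \<cdot> v i" unfolding i .
qed

lemma c_u_\<iota>_eq_c_u_\<alpha>: "(c \<cdot> u (k * n)) \<cdot> \<iota> n = (c \<cdot> u k) \<cdot> \<alpha> n"
proof -
  have "(c \<cdot> u (k * n)) \<cdot> \<iota> n = (c \<cdot> p) \<cdot> v (k, n)"
    using comp_assoc[OF cat v_hom p_hom c_hom] comp_assoc[OF cat \<iota>_hom u_hom c_hom] p_v by simp
  also have "\<dots> = (c \<cdot> q) \<cdot> v (k, n)" by (simp add: c_coequalizes)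
  also have "\<dots> = (c \<cdot> u k) \<cdot> \<alpha> n"
    using comp_assoc[OF cat v_hom q_hom c_hom] comp_assoc[OF cat \<alpha>_hom u_hom c_hom] q_v by simp
  finally show ?thesis .
qed

lemma c_u_hom: "hom C (c \<cdot> u s) X Y"
  by (rule comp_hom[OF cat u_hom c_hom])

lemma morphism_from_Y_eqI:
  assumes k: "hom C k Y Z" and k': "hom C k' Y Z"
    and eq: "\<And>s. k \<cdot> (c \<cdot> u s) = k' \<cdot> (c \<cdot> u s)"
  shows "k = k'"
proof (rule coequalizer_eqI[OF coequalizer cat k k'])
  show "k \<cdot> c = k' \<cdot> c"
  proof (rule coproduct_eqI[OF cat coproduct_S comp_hom[OF cat c_hom k] comp_hom[OF cat c_hom k']])
    show "(k \<cdot> c) \<cdot> u s = (k' \<cdot> c) \<cdot> u s" for s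
      using eq[of s] comp_assoc[OF cat u_hom c_hom k] comp_assoc[OF cat u_hom c_hom k'] by simp
  qed
qed

lemma translation_exists: "\<exists>b. hom C b Y Y \<and> (\<forall>s. b \<cdot> (c \<cdot> u s) = c \<cdot> u (m * s))"
proof -
  obtain \<sigma> where \<sigma>: "hom C \<sigma> S S" and \<sigma>_u: "\<And>s. \<sigma> \<cdot> u s = u (m * s)"
    using coproduct_factor[OF coproduct_S S_Obj u_hom] by metis
  have c\<sigma>: "hom C (c \<cdot> \<sigma>) S Y"
    by (rule comp_hom[OF cat \<sigma> c_hom])
  have c\<sigma>_u: "(c \<cdot> \<sigma>) \<cdot> u s = c \<cdot> u (m * s)" for s
    using comp_assoc[OF cat u_hom \<sigma> c_hom] \<sigma>_u by simp
  have "(c \<cdot> \<sigma>) \<cdot> p = (c \<cdot> \<sigma>) \<cdot> q"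
    by (rule coequalizesI[OF c\<sigma>]) (simp only: c\<sigma>_u mult.assoc[symmetric] c_u_\<iota>_eq_c_u_\<alpha>)
  then obtain b where b: "hom C b Y Y" and bc: "b \<cdot> c = c \<cdot> \<sigma>"
    using coequalizer_factor[OF coequalizer cat] c\<sigma> p_hom unfolding hom_def by metis
  have "b \<cdot> (c \<cdot> u s) = c \<cdot> u (m * s)" for s
    using comp_assoc[OF cat u_hom c_hom b] bc c\<sigma>_u by simp
  with b show ?thesis by blast
qed

definition translation :: "'m \<Rightarrow> 'a" where
  "translation m = (SOME b. hom C b Y Y \<and> (\<forall>s. b \<cdot> (c \<cdot> u s) = c \<cdot> u (m * s)))"

lemma translation_hom: "hom C (translation m) Y Y"
  and translation_c_u: "translation m \<cdot> (c \<cdot> u s) = c \<cdot> u (m * s)"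
  using someI_ex[OF translation_exists[of m]] unfolding translation_def by blast+

lemma translation_unique:
  assumes "hom C b Y Y" "\<And>s. b \<cdot> (c \<cdot> u s) = c \<cdot> u (m * s)"
  shows "b = translation m"
  using morphism_from_Y_eqI[OF assms(1) translation_hom] assms(2) translation_c_u by simp

lemma global_action_translation: "global_action C Y translation"
  unfolding global_action_def
proof (intro conjI allI Y_Obj translation_hom)
  show "translation 1 = Idm C Y"
    using translation_unique[OF Idm_hom[OF cat Y_Obj], of 1] comp_Idm_left[OF cat c_u_hom] by simp
  fix m n
  have "(translation n \<cdot> translation m) \<cdot> (c \<cdot> u s) = c \<cdot> u ((n * m) * s)" for s
    using comp_assoc[OF cat c_u_hom translation_hom translation_hom]
    by (simp add: translation_c_u mult.assoc)
  then show "translation n \<cdot> translation m = translation (n * m)"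
    by (rule translation_unique[OF comp_hom[OF cat translation_hom translation_hom]])
qed

lemma unit_datum_morphism:
  "datum_morphism_to_global C X D \<iota> \<alpha> Y translation (c \<cdot> u 1)"
proof -
  have "translation m \<cdot> ((c \<cdot> u 1) \<cdot> \<iota> m) = (c \<cdot> u 1) \<cdot> \<alpha> m" for m
    using comp_assoc[OF cat \<iota>_hom c_u_hom translation_hom, symmetric] translation_c_u[of m 1]
      c_u_\<iota>_eq_c_u_\<alpha>[of 1 m] by simp
  then show ?thesis
    by (simp add: datum_morphism_to_global_iff[OF cat \<iota>_hom] c_u_hom)
qed

context
  fixes Z \<gamma> f
  assumes \<gamma>: "global_action C Z \<gamma>"
    and f: "datum_morphism_to_global C X D \<iota> \<alpha> Z \<gamma> f"
begin

lemma \<gamma>_hom: "hom C (\<gamma> m) Z Z" and \<gamma>_1: "\<gamma> 1 = Idm C Z"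
  and \<gamma>_mult: "\<gamma> n \<cdot> \<gamma> m = \<gamma> (n * m)" and Z_Obj: "Z \<in> Obj C"
  using \<gamma> unfolding global_action_def by auto

lemma f_hom: "hom C f X Z" and f_equivariant: "\<gamma> m \<cdot> (f \<cdot> \<iota> m) = f \<cdot> \<alpha> m"
  using f unfolding datum_morphism_to_global_iff[OF cat \<iota>_hom] by auto

lemma extension_exists: "\<exists>f'. hom C f' Y Z \<and> (\<forall>s. f' \<cdot> (c \<cdot> u s) = \<gamma> s \<cdot> f)"
proof -
  have \<gamma>f: "hom C (\<gamma> s \<cdot> f) X Z" for s
    by (rule comp_hom[OF cat f_hom \<gamma>_hom])
  obtain g where g: "hom C g S Z" and g_u: "\<And>s. g \<cdot> u s = \<gamma> s \<cdot> f"
    using coproduct_factor[OF coproduct_S Z_Obj, of "\<lambda>s. \<gamma> s \<cdot> f"] \<gamma>f by blast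
  have "(g \<cdot> u (k * n)) \<cdot> \<iota> n = (g \<cdot> u k) \<cdot> \<alpha> n" for k n
  proof -
    have "(g \<cdot> u (k * n)) \<cdot> \<iota> n = \<gamma> k \<cdot> (\<gamma> n \<cdot> (f \<cdot> \<iota> n))"
      using g_u \<gamma>_mult[of k n, symmetric] comp_assoc[OF cat \<iota>_hom f_hom \<gamma>_hom]
        comp_assoc[OF cat f_hom \<gamma>_hom \<gamma>_hom] comp_assoc[OF cat \<iota>_hom \<gamma>f \<gamma>_hom] by simp
    also have "\<dots> = (g \<cdot> u k) \<cdot> \<alpha> n"
      using g_u f_equivariant comp_assoc[OF cat \<alpha>_hom f_hom \<gamma>_hom] by simp
    finally show ?thesis .
  qed
  then have "g \<cdot> p = g \<cdot> q" by (rule coequalizesI[OF g])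
  then obtain f' where f': "hom C f' Y Z" and f'c: "f' \<cdot> c = g"
    using coequalizer_factor[OF coequalizer cat] g p_hom unfolding hom_def by metis
  have "f' \<cdot> (c \<cdot> u s) = \<gamma> s \<cdot> f" for s
    using comp_assoc[OF cat u_hom c_hom f'] f'c g_u by simp
  with f' show ?thesis by blast
qed

lemma extension_unique:
  assumes h: "hom C h Y Z" and equiv: "\<And>m. \<gamma> m \<cdot> h = h \<cdot> translation m"
    and unit: "h \<cdot> (c \<cdot> u 1) = f"
    and f': "hom C f' Y Z" and f'_u: "\<And>s. f' \<cdot> (c \<cdot> u s) = \<gamma> s \<cdot> f"
  shows "h = f'"
proof (rule morphism_from_Y_eqI[OF h f'])
  fix s
  have "h \<cdot> (c \<cdot> u s) = h \<cdot> (translation s \<cdot> (c \<cdot> u 1))"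
    using translation_c_u[of s 1] by simp
  also have "\<dots> = \<gamma> s \<cdot> (h \<cdot> (c \<cdot> u 1))"
    using comp_assoc[OF cat c_u_hom translation_hom h] comp_assoc[OF cat c_u_hom h \<gamma>_hom] equiv
    by simp
  finally show "h \<cdot> (c \<cdot> u s) = f' \<cdot> (c \<cdot> u s)"
    using unit f'_u by simp
qed

lemma unit_universal:
  "\<exists>!f'. datum_morphism C Y (\<lambda>_. Y) (\<lambda>_. Idm C Y) translation Z (\<lambda>_. Z) (\<lambda>_. Idm C Z) \<gamma> f' \<and>
         f' \<cdot> (c \<cdot> u 1) = f"
proof -
  obtain f' where f': "hom C f' Y Z" and f'_u: "\<And>s. f' \<cdot> (c \<cdot> u s) = \<gamma> s \<cdot> f"
    using extension_exists by blast
  have "\<gamma> m \<cdot> f' = f' \<cdot> translation m" for m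
  proof (rule morphism_from_Y_eqI[OF comp_hom[OF cat f' \<gamma>_hom] comp_hom[OF cat translation_hom f']])
    show "(\<gamma> m \<cdot> f') \<cdot> (c \<cdot> u s) = (f' \<cdot> translation m) \<cdot> (c \<cdot> u s)" for s
      using comp_assoc[OF cat c_u_hom f' \<gamma>_hom] comp_assoc[OF cat c_u_hom translation_hom f']
        comp_assoc[OF cat f_hom \<gamma>_hom \<gamma>_hom] f'_u translation_c_u \<gamma>_mult by simp
  qed
  moreover have "f' \<cdot> (c \<cdot> u 1) = f"
    using f'_u[of 1] \<gamma>_1 comp_Idm_left[OF cat f_hom] by simp
  ultimately show ?thesis
    unfolding datum_morphism_global_iff[OF cat Y_Obj]
    using f' extension_unique[OF _ _ _ f' f'_u] by blast
qed

end

lemma is_reflection_unit: "is_reflection C X D \<iota> \<alpha> Y translation (c \<cdot> u 1)"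
  unfolding is_reflection_def
  using global_action_translation unit_datum_morphism unit_universal by blast

end

theorem mainTheorem11:
  fixes C :: "('o, 'a) cat"
    and X :: 'o and D :: "'m::monoid_mult \<Rightarrow> 'o" and \<iota> \<alpha> :: "'m \<Rightarrow> 'a"
    and S T Y :: 'o and u :: "'m \<Rightarrow> 'a" and v :: "'m \<times> 'm \<Rightarrow> 'a"
    and p q c :: 'a
  assumes "is_category C"
    and "has_pullbacks C"
    and "partial_action_datum C X D \<iota> \<alpha>"
    and "is_coproduct C (\<lambda>_. X) S u"
    and "is_coproduct C (\<lambda>(m, n). D n) T v"
    and "hom C p T S" and "\<forall>m n. Comp C p (v (m, n)) = Comp C (u (m * n)) (\<iota> n)"
    and "hom C q T S" and "\<forall>m n. Comp C q (v (m, n)) = Comp C (u m) (\<alpha> n)"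
    and "is_coequalizer C p q c Y"
  shows "\<exists>\<beta>. (\<forall>m. hom C (\<beta> m) Y Y \<and>
               (\<forall>s. Comp C (\<beta> m) (Comp C c (u s)) = Comp C c (u (m * s))) \<and>
               (\<forall>b. hom C b Y Y \<longrightarrow>
                    (\<forall>s. Comp C b (Comp C c (u s)) = Comp C c (u (m * s))) \<longrightarrow> b = \<beta> m)) \<and>
             global_action C Y \<beta> \<and>
             is_reflection C X D \<iota> \<alpha> Y \<beta> (Comp C c (u 1))"
proof -
  interpret coequalizer_of_datum C X D \<iota> \<alpha> S T Y u v p q c
    using assms by unfold_locales auto
  show ?thesis
    using translation_hom translation_c_u translation_unique
      global_action_translation is_reflection_unit by blast
qed

end
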